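(* Let $\alpha,\beta>0$, let $c(\psi)=\sqrt{\alpha\cos^2\psi+\beta\sin^2\psi}$, let $p\ge0$ be an integer, let $C>0$ and $\theta\ge1/2$, and let $X_{\Delta x}^p(\Omega)$ be the discontinuous piecewise polynomial space on the periodic mesh described in the context. Suppose $v,w,\psi:[0,T]\to X_{\Delta x}^p(\Omega)$ are differentiable in time and, for every $t\in[0,T]$, satisfy (with $c=c(\psi(x,t))$ inside integrals, $x$-derivatives taken cellwise, sums over $j=1,\dots,N$) $$\sum_j\int_{\Omega_j}v_t\phi\,dx+\sum_j\int_{\Omega_j}c\,w\phi_x\,dx-\sum_j\Big(\overline{c}_{j+1/2}\overline{w}_{j+1/2}+\tfrac12 s_{j+1/2}\llbracket v\rrbracket_{j+1/2}\Big)\phi^-_{j+1/2}+\sum_j\Big(\overline{c}_{j-1/2}\overline{w}_{j-1/2}+\tfrac12 s_{j-1/2}\llbracket v\rrbracket_{j-1/2}\Big)\phi^+_{j-1/2}$$ $$=\sum_j\int_{\Omega_j}c\,(w\phi)_x\,dx-\sum_j\overline{c}_{j+1/2}w^-_{j+1/2}\phi^-_{j+1/2}+\sum_j\overline{c}_{j-1/2}w^+_{j-1/2}\phi^+_{j-1/2}-\sum_j\varepsilon_j\int_{\Omega_j}v_x\phi_x\,dx$$ for all $\phi\in X_{\Delta x}^p(\Omega)$, $$\sum_j\int_{\Omega_j}w_t\eta\,dx+\sum_j\int_{\Omega_j}c\,v\eta_x\,dx-\sum_j\Big(\overline{c}_{j+1/2}\overline{v}_{j+1/2}+\tfrac12 s_{j+1/2}\llbracket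 w\rrbracket_{j+1/2}\Big)\eta^-_{j+1/2}+\sum_j\Big(\overline{c}_{j-1/2}\overline{v}_{j-1/2}+\tfrac12 s_{j-1/2}\llbracket w\rrbracket_{j-1/2}\Big)\eta^+_{j-1/2}=-\sum_j\varepsilon_j\int_{\Omega_j}w_x\eta_x\,dx$$ for all $\eta\in X_{\Delta x}^p(\Omega)$, and $\sum_j\int_{\Omega_j}\psi_t\zeta\,dx=\sum_j\int_{\Omega_j}v\zeta\,dx$ for all $\zeta\in X_{\Delta x}^p(\Omega)$. Here $s_{j+1/2}=\max\{c^-_{j+1/2},c^+_{j+1/2}\}$ and $$\varepsilon_j=\frac{\Delta x_j\,C\,\big(\int_{\Omega_j}\mathrm{Res}^2\,dx\big)^{1/2}}{\big(\int_{\Omega_j}(v_x^2+w_x^2)\,dx\big)^{1/2}+\Delta x_j^\theta},\qquad \mathrm{Res}=(v^2+w^2)_t-\big(2c(\psi)vw\big)_x.$$ Then $$\frac{d}{dt}\left(\sum_{j=1}^N\int_{\Omega_j}\frac{v^2+w^2}{2}\,dx\right)\le 0.$$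
   Context: The domain $\Omega$ is partitioned into cells $\Omega_j=[x_{j-1/2},x_{j+1/2}]$, $j=1,\dots,N$, with $\Delta x_j=x_{j+1/2}-x_{j-1/2}$. $X_{\Delta x}^p(\Omega)=\{u\in L^2(\Omega): u|_{\Omega_j}$ is a polynomial of degree $\le p$ for each $j\}$. For a grid function $u$, $u^+_{j+1/2}$ and $u^-_{j+1/2}$ denote its traces at $x_{j+1/2}$ from the right and left respectively; $\overline{u}_{j+1/2}=(u^+_{j+1/2}+u^-_{j+1/2})/2$ and $\llbracket u\rrbracket_{j+1/2}=u^+_{j+1/2}-u^-_{j+1/2}$. Also $c^\pm_{j+1/2}=c(\psi^\pm_{j+1/2})$ and $\overline{c}_{j+1/2}=(c^+_{j+1/2}+c^-_{j+1/2})/2$. Periodic boundary conditions: the endpoints $x_{1/2}$ and $x_{N+1/2}$ are identified, i.e. $u^-_{1/2}:=u^-_{N+1/2}$ (trace from cell $N$) and $u^+_{N+1/2}:=u^+_{1/2}$ (trace from cell $1$), for all grid functions including $\psi$ and the test functions. *)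

theory Defs
  imports "HOL-Analysis.Analysis" "HOL-Computational_Algebra.Polynomial"
begin

text \<open>Mesh: nodes xp k = x_{k+1/2}, k = 0..N; cell j (j = 1..N) is [xp (j-1), xp j].
A grid function in X^p is represented by its polynomial pieces u :: nat => real poly,
u j being the polynomial on cell j.\<close>

definition cspeed :: "real \<Rightarrow> real \<Rightarrow> real \<Rightarrow> real" where
  "cspeed \<alpha> \<beta> \<psi> = sqrt (\<alpha> * (cos \<psi>)\<^sup>2 + \<beta> * (sin \<psi>)\<^sup>2)"

definition inXp :: "nat \<Rightarrow> nat \<Rightarrow> (nat \<Rightarrow> real poly) \<Rightarrow> bool" where
  "inXp N p u \<longleftrightarrow> (\<forall>j\<in>{1..N}. degree (u j) \<le> p)"

definition dx :: "(nat \<Rightarrow> real) \<Rightarrow> nat \<Rightarrow> real" where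
  "dx xp j = xp j - xp (j - 1)"

definition cint :: "(nat \<Rightarrow> real) \<Rightarrow> nat \<Rightarrow> (real \<Rightarrow> real) \<Rightarrow> real" where
  "cint xp j f = integral {xp (j - 1)..xp j} f"

definition trm :: "(nat \<Rightarrow> real) \<Rightarrow> nat \<Rightarrow> (nat \<Rightarrow> real poly) \<Rightarrow> nat \<Rightarrow> real" where
  "trm xp N u k = (if k = 0 then poly (u N) (xp N) else poly (u k) (xp k))"

definition trp :: "(nat \<Rightarrow> real) \<Rightarrow> nat \<Rightarrow> (nat \<Rightarrow> real poly) \<Rightarrow> nat \<Rightarrow> real" where
  "trp xp N u k = (if k = N then poly (u 1) (xp 0) else poly (u (Suc k)) (xp k))"

definition avg :: "(nat \<Rightarrow> real) \<Rightarrow> nat \<Rightarrow> (nat \<Rightarrow> real poly) \<Rightarrow> nat \<Rightarrow> real" where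
  "avg xp N u k = (trp xp N u k + trm xp N u k) / 2"

definition jump :: "(nat \<Rightarrow> real) \<Rightarrow> nat \<Rightarrow> (nat \<Rightarrow> real poly) \<Rightarrow> nat \<Rightarrow> real" where
  "jump xp N u k = trp xp N u k - trm xp N u k"

definition cp :: "real \<Rightarrow> real \<Rightarrow> (nat \<Rightarrow> real) \<Rightarrow> nat \<Rightarrow> (nat \<Rightarrow> real poly) \<Rightarrow> nat \<Rightarrow> real" where
  "cp \<alpha> \<beta> xp N \<psi> k = cspeed \<alpha> \<beta> (trp xp N \<psi> k)"

definition cm :: "real \<Rightarrow> real \<Rightarrow> (nat \<Rightarrow> real) \<Rightarrow> nat \<Rightarrow> (nat \<Rightarrow> real poly) \<Rightarrow> nat \<Rightarrow> real" where
  "cm \<alpha> \<beta> xp N \<psi> k = cspeed \<alpha> \<beta> (trm xp N \<psi> k)"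

definition cavg :: "real \<Rightarrow> real \<Rightarrow> (nat \<Rightarrow> real) \<Rightarrow> nat \<Rightarrow> (nat \<Rightarrow> real poly) \<Rightarrow> nat \<Rightarrow> real" where
  "cavg \<alpha> \<beta> xp N \<psi> k = (cp \<alpha> \<beta> xp N \<psi> k + cm \<alpha> \<beta> xp N \<psi> k) / 2"

definition smax :: "real \<Rightarrow> real \<Rightarrow> (nat \<Rightarrow> real) \<Rightarrow> nat \<Rightarrow> (nat \<Rightarrow> real poly) \<Rightarrow> nat \<Rightarrow> real" where
  "smax \<alpha> \<beta> xp N \<psi> k = max (cm \<alpha> \<beta> xp N \<psi> k) (cp \<alpha> \<beta> xp N \<psi> k)"

definition flux :: "real \<Rightarrow> real \<Rightarrow> (nat \<Rightarrow> real) \<Rightarrow> nat \<Rightarrow> (nat \<Rightarrow> real poly)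
     \<Rightarrow> (nat \<Rightarrow> real poly) \<Rightarrow> (nat \<Rightarrow> real poly) \<Rightarrow> nat \<Rightarrow> real" where
  "flux \<alpha> \<beta> xp N \<psi> a b k =
     cavg \<alpha> \<beta> xp N \<psi> k * avg xp N a k + smax \<alpha> \<beta> xp N \<psi> k * jump xp N b k / 2"

definition Res :: "real \<Rightarrow> real \<Rightarrow> (nat \<Rightarrow> real poly) \<Rightarrow> (nat \<Rightarrow> real poly) \<Rightarrow> (nat \<Rightarrow> real poly)
     \<Rightarrow> (nat \<Rightarrow> real poly) \<Rightarrow> (nat \<Rightarrow> real poly) \<Rightarrow> nat \<Rightarrow> real \<Rightarrow> real" where
  "Res \<alpha> \<beta> \<psi> v w vt wt j x =
     2 * poly (v j) x * poly (vt j) x + 2 * poly (w j) x * poly (wt j) x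
     - deriv (\<lambda>y. 2 * cspeed \<alpha> \<beta> (poly (\<psi> j) y) * poly (v j) y * poly (w j) y) x"

definition visc :: "real \<Rightarrow> real \<Rightarrow> real \<Rightarrow> real \<Rightarrow> (nat \<Rightarrow> real) \<Rightarrow> (nat \<Rightarrow> real poly)
     \<Rightarrow> (nat \<Rightarrow> real poly) \<Rightarrow> (nat \<Rightarrow> real poly) \<Rightarrow> (nat \<Rightarrow> real poly) \<Rightarrow> (nat \<Rightarrow> real poly)
     \<Rightarrow> nat \<Rightarrow> real" where
  "visc \<alpha> \<beta> C \<theta> xp \<psi> v w vt wt j =
     dx xp j * C * sqrt (cint xp j (\<lambda>x. (Res \<alpha> \<beta> \<psi> v w vt wt j x)\<^sup>2))
     / (sqrt (cint xp j (\<lambda>x. (poly (pderiv (v j)) x)\<^sup>2 + (poly (pderiv (w j)) x)\<^sup>2))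
        + dx xp j powr \<theta>)"

end

theory Submission
  imports Defs
begin

text \<open>Testing the $v$-equation with $\phi = v$ and the $w$-equation with $\eta = w$ and adding
gives the energy rate $\sum_j \int_{\Omega_j} (v_t v + w_t w)$. The two volume terms
$c\,w\,v_x + c\,v\,w_x$ combine into the cellwise exact derivative $c\,(wv)_x$ of the right-hand
side; after a periodic index shift the interface terms at $x_{j+1/2}$ collapse to
$-\tfrac12 s_{j+1/2}(\llbracket v\rrbracket^2 + \llbracket w\rrbracket^2) \le 0$; and the
viscosity contributes $-\varepsilon_j \int (v_x^2 + w_x^2) \le 0$ because $\varepsilon_j \ge 0$.
The time derivative of the energy is computed coefficientwise, the pieces being polynomials of
bounded degree.\<close>

lemma poly_eq_sum_coeff_atMost:
  fixes P :: "real poly"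
  assumes "degree P \<le> M"
  shows "poly P x = (\<Sum>k\<le>M. coeff P k * x ^ k)"
proof -
  have "poly P x = (\<Sum>k\<le>degree P. coeff P k * x ^ k)" by (rule poly_altdef)
  also have "\<dots> = (\<Sum>k\<le>M. coeff P k * x ^ k)"
    by (rule sum.mono_neutral_left) (use assms le_degree in auto)
  finally show ?thesis .
qed

lemma integral_poly_eq_sum_coeff:
  fixes P :: "real poly"
  assumes "degree P \<le> M"
  shows "integral {a..b} (poly P) = (\<Sum>k\<le>M. coeff P k * integral {a..b} (\<lambda>x. x ^ k))"
proof -
  have "integral {a..b} (poly P) = integral {a..b} (\<lambda>x. \<Sum>k\<le>M. coeff P k * x ^ k)"
    using poly_eq_sum_coeff_atMost[OF assms] by presburger
  also have "\<dots> = (\<Sum>k\<le>M. integral {a..b} (\<lambda>x. coeff P k * x ^ k))"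
    by (rule integral_sum) (auto intro!: integrable_continuous_interval continuous_intros)
  finally show ?thesis by simp
qed

lemma has_real_derivative_integral_poly:
  fixes P :: "real \<Rightarrow> real poly"
  assumes deg: "\<forall>s\<in>S. degree (P s) \<le> M" and deg': "degree P' \<le> M" and t: "t \<in> S"
    and coeff_deriv: "\<And>k. ((\<lambda>s. coeff (P s) k) has_real_derivative coeff P' k) (at t within S)"
  shows "((\<lambda>s. integral {a..b} (poly (P s))) has_real_derivative integral {a..b} (poly P'))
           (at t within S)"
proof -
  have "((\<lambda>s. \<Sum>k\<le>M. coeff (P s) k * integral {a..b} (\<lambda>x. x ^ k)) has_real_derivative
        (\<Sum>k\<le>M. coeff P' k * integral {a..b} (\<lambda>x. x ^ k))) (at t within S)"
    by (intro DERIV_sum DERIV_cmult_right coeff_deriv)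
  then have "((\<lambda>s. \<Sum>k\<le>M. coeff (P s) k * integral {a..b} (\<lambda>x. x ^ k)) has_real_derivative
        integral {a..b} (poly P')) (at t within S)"
    using integral_poly_eq_sum_coeff[OF deg'] by simp
  then show ?thesis
    by (rule has_field_derivative_transform_within[where d=1])
       (use t deg integral_poly_eq_sum_coeff in auto)
qed

lemma has_real_derivative_integral_poly_square:
  fixes P :: "real \<Rightarrow> real poly"
  assumes deg: "\<forall>s\<in>S. degree (P s) \<le> p" and t: "t \<in> S"
    and coeff_deriv: "\<And>k. ((\<lambda>s. coeff (P s) k) has_real_derivative coeff P' k) (at t within S)"
  shows "((\<lambda>s. integral {a..b} (\<lambda>x. (poly (P s) x)\<^sup>2 / 2)) has_real_derivative
           integral {a..b} (\<lambda>x. poly P' x * poly (P t) x)) (at t within S)"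
proof -
  define Q where "Q s = smult (1/2) (P s * P s)" for s
  have coeff_Q: "((\<lambda>s. coeff (Q s) n) has_real_derivative coeff (P' * P t) n) (at t within S)"
    for n
  proof -
    have "((\<lambda>s. (1/2) * (\<Sum>i\<le>n. coeff (P s) i * coeff (P s) (n-i))) has_real_derivative
       (1/2) * (\<Sum>i\<le>n. coeff P' i * coeff (P t) (n-i) + coeff (P t) i * coeff P' (n-i)))
       (at t within S)"
      by (intro DERIV_cmult DERIV_sum) (auto intro!: derivative_eq_intros coeff_deriv)
    moreover have "(\<Sum>i\<le>n. coeff P' i * coeff (P t) (n-i) + coeff (P t) i * coeff P' (n-i))
       = coeff (P' * P t) n + coeff (P t * P') n"
      by (simp add: coeff_mult sum.distrib)
    ultimately show ?thesis by (simp add: Q_def coeff_mult mult.commute[of "P t" P'])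
  qed
  have deg_Q: "degree (Q s) \<le> 2 * p + degree P'" if "s \<in> S" for s
  proof -
    have "degree (Q s) \<le> degree (P s) + degree (P s)"
      unfolding Q_def by (metis degree_mult_le degree_smult_le order_trans)
    then show ?thesis using deg that by fastforce
  qed
  have "degree (P' * P t) \<le> 2 * p + degree P'"
    using degree_mult_le[of P' "P t"] deg t by fastforce
  then have "((\<lambda>s. integral {a..b} (poly (Q s))) has_real_derivative
              integral {a..b} (poly (P' * P t))) (at t within S)"
    using deg_Q t coeff_Q by (intro has_real_derivative_integral_poly) auto
  moreover have "(\<lambda>x. (poly (P s) x)\<^sup>2 / 2) = poly (Q s)" for s
    by (auto simp: Q_def power2_eq_square)
  moreover have "poly (P' * P t) = (\<lambda>x. poly P' x * poly (P t) x)" by auto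
  ultimately show ?thesis by simp
qed

lemma sum_periodic_shift:
  fixes f :: "nat \<Rightarrow> 'a::comm_monoid_add"
  assumes "N \<ge> 1" "f 0 = f N"
  shows "(\<Sum>j=1..N. f (j - 1)) = (\<Sum>j=1..N. f j)"
proof -
  obtain m where N: "N = Suc m" using assms by (cases N) auto
  have "(\<Sum>j=1..Suc m. f (j - 1)) = (\<Sum>i=0..m. f i)"
    using sum.shift_bounds_cl_Suc_ivl[of "\<lambda>j. f (j - 1)" 0 m] by simp
  also have "\<dots> = f 0 + (\<Sum>i=1..m. f i)" by (simp add: sum.atLeast_Suc_atMost)
  also have "\<dots> = (\<Sum>i=1..Suc m. f i)" using assms N by (simp add: add.commute)
  finally show ?thesis using N by simp
qed

text \<open>No integrability hypothesis is needed: a non-integrable function has integral 0.\<close>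
lemma integral_nonneg_pointwise:
  fixes f :: "real \<Rightarrow> real"
  assumes "\<And>x. 0 \<le> f x"
  shows "0 \<le> integral S f"
proof (cases "f integrable_on S")
  case True then show ?thesis by (rule integral_nonneg) (use assms in auto)
next
  case False then show ?thesis by (simp add: not_integrable_integral)
qed

lemma cspeed_nonneg: "0 \<le> \<alpha> \<Longrightarrow> 0 \<le> \<beta> \<Longrightarrow> 0 \<le> cspeed \<alpha> \<beta> x"
  unfolding cspeed_def by (intro real_sqrt_ge_zero add_nonneg_nonneg mult_nonneg_nonneg) auto

lemma continuous_on_cspeed_poly: "continuous_on A (\<lambda>x. cspeed \<alpha> \<beta> (poly P x))"
  unfolding cspeed_def by (intro continuous_intros)

lemma smax_nonneg: "0 \<le> \<alpha> \<Longrightarrow> 0 \<le> \<beta> \<Longrightarrow> 0 \<le> smax \<alpha> \<beta> xp N \<psi> k"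
  unfolding smax_def cm_def using cspeed_nonneg by (simp add: le_max_iff_disj)

lemma visc_nonneg:
  assumes "0 \<le> C" "xp (j - 1) \<le> xp j"
  shows "0 \<le> visc \<alpha> \<beta> C \<theta> xp \<psi> v w vt wt j"
  unfolding visc_def cint_def dx_def using assms
  by (intro divide_nonneg_nonneg mult_nonneg_nonneg add_nonneg_nonneg real_sqrt_ge_zero
      integral_nonneg_pointwise) auto

lemma flux_periodic: "N \<ge> 1 \<Longrightarrow> flux \<alpha> \<beta> xp N \<psi> a b 0 = flux \<alpha> \<beta> xp N \<psi> a b N"
  and cavg_periodic: "N \<ge> 1 \<Longrightarrow> cavg \<alpha> \<beta> xp N \<psi> 0 = cavg \<alpha> \<beta> xp N \<psi> N"
  and trp_periodic: "N \<ge> 1 \<Longrightarrow> trp xp N u 0 = trp xp N u N"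
  by (simp_all add: flux_def cavg_def cp_def cm_def smax_def avg_def jump_def trm_def trp_def)

lemma interface_energy_flux_eq:
  "cavg \<alpha> \<beta> xp N \<psi> k * trp xp N w k * trp xp N v k
     - cavg \<alpha> \<beta> xp N \<psi> k * trm xp N w k * trm xp N v k
     + flux \<alpha> \<beta> xp N \<psi> w v k * (trm xp N v k - trp xp N v k)
     + flux \<alpha> \<beta> xp N \<psi> v w k * (trm xp N w k - trp xp N w k)
   = - smax \<alpha> \<beta> xp N \<psi> k / 2 * ((jump xp N v k)\<^sup>2 + (jump xp N w k)\<^sup>2)"
  unfolding flux_def avg_def jump_def by (simp add: power2_eq_square field_simps)

lemma cint_product_rule:
  "cint xp j (\<lambda>x. cspeed \<alpha> \<beta> (poly \<psi> x) * poly w x * poly (pderiv v) x)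
   + cint xp j (\<lambda>x. cspeed \<alpha> \<beta> (poly \<psi> x) * poly v x * poly (pderiv w) x)
   = cint xp j (\<lambda>x. cspeed \<alpha> \<beta> (poly \<psi> x) * poly (pderiv (w * v)) x)"
proof -
  have "cint xp j (\<lambda>x. cspeed \<alpha> \<beta> (poly \<psi> x) * poly w x * poly (pderiv v) x)
        + cint xp j (\<lambda>x. cspeed \<alpha> \<beta> (poly \<psi> x) * poly v x * poly (pderiv w) x)
      = cint xp j (\<lambda>x. cspeed \<alpha> \<beta> (poly \<psi> x) * poly w x * poly (pderiv v) x
                      + cspeed \<alpha> \<beta> (poly \<psi> x) * poly v x * poly (pderiv w) x)"
    unfolding cint_def
    by (rule integral_add[symmetric])
       (auto intro!: integrable_continuous_interval continuous_intros continuous_on_cspeed_poly)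
  then show ?thesis by (simp add: pderiv_mult algebra_simps)
qed

lemma has_real_derivative_cell_energy:
  fixes v w :: "real \<Rightarrow> nat \<Rightarrow> real poly"
  assumes t: "t \<in> S"
    and deg: "\<forall>s\<in>S. \<forall>j\<in>{1..N}. degree (v s j) \<le> p \<and> degree (w s j) \<le> p"
    and coeff_deriv: "\<forall>j\<in>{1..N}. \<forall>k.
           ((\<lambda>s. coeff (v s j) k) has_real_derivative coeff (vt j) k) (at t within S) \<and>
           ((\<lambda>s. coeff (w s j) k) has_real_derivative coeff (wt j) k) (at t within S)"
  shows "((\<lambda>s. \<Sum>j=1..N. cint xp j (\<lambda>x. ((poly (v s j) x)\<^sup>2 + (poly (w s j) x)\<^sup>2) / 2))
          has_real_derivative
            (\<Sum>j=1..N. cint xp j (\<lambda>x. poly (vt j) x * poly (v t j) x))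
          + (\<Sum>j=1..N. cint xp j (\<lambda>x. poly (wt j) x * poly (w t j) x))) (at t within S)"
proof -
  have split: "cint xp j (\<lambda>x. ((poly (v s j) x)\<^sup>2 + (poly (w s j) x)\<^sup>2) / 2)
      = cint xp j (\<lambda>x. (poly (v s j) x)\<^sup>2 / 2) + cint xp j (\<lambda>x. (poly (w s j) x)\<^sup>2 / 2)" for s j
    unfolding cint_def add_divide_distrib
    by (rule integral_add) (auto intro!: integrable_continuous_interval continuous_intros)
  have "((\<lambda>s. \<Sum>j=1..N. cint xp j (\<lambda>x. (poly (v s j) x)\<^sup>2 / 2)
                        + cint xp j (\<lambda>x. (poly (w s j) x)\<^sup>2 / 2))
        has_real_derivative (\<Sum>j=1..N. cint xp j (\<lambda>x. poly (vt j) x * poly (v t j) x)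
                                   + cint xp j (\<lambda>x. poly (wt j) x * poly (w t j) x)))
        (at t within S)"
    unfolding cint_def using t deg coeff_deriv
    by (intro DERIV_sum DERIV_add has_real_derivative_integral_poly_square[where p=p]) auto
  then show ?thesis by (simp add: split sum.distrib)
qed

lemma energy_rate_nonpos:
  fixes \<psi> v w vt wt :: "nat \<Rightarrow> real poly"
  assumes "0 \<le> \<alpha>" "0 \<le> \<beta>" "0 \<le> C" "N \<ge> 1" and mesh: "\<forall>j\<in>{1..N}. xp (j - 1) \<le> xp j"
    and v_eq:
         "(\<Sum>j=1..N. cint xp j (\<lambda>x. poly (vt j) x * poly (v j) x))
        + (\<Sum>j=1..N. cint xp j (\<lambda>x. cspeed \<alpha> \<beta> (poly (\<psi> j) x) * poly (w j) x * poly (pderiv (v j)) x))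
        - (\<Sum>j=1..N. flux \<alpha> \<beta> xp N \<psi> w v j * trm xp N v j)
        + (\<Sum>j=1..N. flux \<alpha> \<beta> xp N \<psi> w v (j - 1) * trp xp N v (j - 1))
        = (\<Sum>j=1..N. cint xp j (\<lambda>x. cspeed \<alpha> \<beta> (poly (\<psi> j) x) * poly (pderiv (w j * v j)) x))
        - (\<Sum>j=1..N. cavg \<alpha> \<beta> xp N \<psi> j * trm xp N w j * trm xp N v j)
        + (\<Sum>j=1..N. cavg \<alpha> \<beta> xp N \<psi> (j - 1) * trp xp N w (j - 1) * trp xp N v (j - 1))
        - (\<Sum>j=1..N. visc \<alpha> \<beta> C \<theta> xp \<psi> v w vt wt j *
                       cint xp j (\<lambda>x. poly (pderiv (v j)) x * poly (pderiv (v j)) x))"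
    and w_eq:
         "(\<Sum>j=1..N. cint xp j (\<lambda>x. poly (wt j) x * poly (w j) x))
        + (\<Sum>j=1..N. cint xp j (\<lambda>x. cspeed \<alpha> \<beta> (poly (\<psi> j) x) * poly (v j) x * poly (pderiv (w j)) x))
        - (\<Sum>j=1..N. flux \<alpha> \<beta> xp N \<psi> v w j * trm xp N w j)
        + (\<Sum>j=1..N. flux \<alpha> \<beta> xp N \<psi> v w (j - 1) * trp xp N w (j - 1))
        = - (\<Sum>j=1..N. visc \<alpha> \<beta> C \<theta> xp \<psi> v w vt wt j *
                       cint xp j (\<lambda>x. poly (pderiv (w j)) x * poly (pderiv (w j)) x))"
  shows "(\<Sum>j=1..N. cint xp j (\<lambda>x. poly (vt j) x * poly (v j) x))
       + (\<Sum>j=1..N. cint xp j (\<lambda>x. poly (wt j) x * poly (w j) x)) \<le> 0"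
proof -
  have volume: "(\<Sum>j=1..N. cint xp j (\<lambda>x. cspeed \<alpha> \<beta> (poly (\<psi> j) x) * poly (w j) x * poly (pderiv (v j)) x))
      + (\<Sum>j=1..N. cint xp j (\<lambda>x. cspeed \<alpha> \<beta> (poly (\<psi> j) x) * poly (v j) x * poly (pderiv (w j)) x))
      = (\<Sum>j=1..N. cint xp j (\<lambda>x. cspeed \<alpha> \<beta> (poly (\<psi> j) x) * poly (pderiv (w j * v j)) x))"
    by (simp add: sum.distrib[symmetric] cint_product_rule)
  have shift_v: "(\<Sum>j=1..N. flux \<alpha> \<beta> xp N \<psi> w v (j - 1) * trp xp N v (j - 1))
      = (\<Sum>j=1..N. flux \<alpha> \<beta> xp N \<psi> w v j * trp xp N v j)"
    by (rule sum_periodic_shift) (use \<open>N \<ge> 1\<close> in \<open>simp_all add: flux_periodic trp_periodic\<close>)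
  have shift_w: "(\<Sum>j=1..N. flux \<alpha> \<beta> xp N \<psi> v w (j - 1) * trp xp N w (j - 1))
      = (\<Sum>j=1..N. flux \<alpha> \<beta> xp N \<psi> v w j * trp xp N w j)"
    by (rule sum_periodic_shift) (use \<open>N \<ge> 1\<close> in \<open>simp_all add: flux_periodic trp_periodic\<close>)
  have shift_c: "(\<Sum>j=1..N. cavg \<alpha> \<beta> xp N \<psi> (j - 1) * trp xp N w (j - 1) * trp xp N v (j - 1))
      = (\<Sum>j=1..N. cavg \<alpha> \<beta> xp N \<psi> j * trp xp N w j * trp xp N v j)"
    by (rule sum_periodic_shift) (use \<open>N \<ge> 1\<close> in \<open>simp_all add: cavg_periodic trp_periodic\<close>)
  have viscous: "0 \<le> (\<Sum>j=1..N. visc \<alpha> \<beta> C \<theta> xp \<psi> v w vt wt j *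
                       cint xp j (\<lambda>x. poly (pderiv (u j)) x * poly (pderiv (u j)) x))" for u
    unfolding cint_def using mesh \<open>0 \<le> C\<close>
    by (intro sum_nonneg mult_nonneg_nonneg[OF visc_nonneg integral_nonneg_pointwise]) auto
  have interface: "(\<Sum>j=1..N. cavg \<alpha> \<beta> xp N \<psi> j * trp xp N w j * trp xp N v j
       - cavg \<alpha> \<beta> xp N \<psi> j * trm xp N w j * trm xp N v j
       + flux \<alpha> \<beta> xp N \<psi> w v j * (trm xp N v j - trp xp N v j)
       + flux \<alpha> \<beta> xp N \<psi> v w j * (trm xp N w j - trp xp N w j)) \<le> 0"
    unfolding interface_energy_flux_eq using smax_nonneg[OF \<open>0 \<le> \<alpha>\<close> \<open>0 \<le> \<beta>\<close>]
    by (intro sum_nonpos) (simp add: mult_nonneg_nonneg)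
  show ?thesis
    using v_eq w_eq volume shift_v shift_w shift_c viscous[of v] viscous[of w] interface
    by (simp add: sum.distrib sum_subtractf right_diff_distrib)
qed

theorem proposition2p4:
  fixes \<alpha> \<beta> C \<theta> T :: real and p N :: nat and xp :: "nat \<Rightarrow> real"
    and v w \<psi> vt wt \<psi>t :: "real \<Rightarrow> nat \<Rightarrow> real poly"
  assumes "\<alpha> > 0" "\<beta> > 0" "C > 0" "\<theta> \<ge> 1/2"
    and "N \<ge> 1" and "strict_mono_on {0..N} xp"
    and "\<forall>t\<in>{0..T}. inXp N p (v t) \<and> inXp N p (w t) \<and> inXp N p (\<psi> t)"
    and "\<forall>t\<in>{0..T}. \<forall>j\<in>{1..N}. \<forall>k.
           ((\<lambda>s. coeff (v s j) k) has_real_derivative coeff (vt t j) k) (at t within {0..T}) \<and>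
           ((\<lambda>s. coeff (w s j) k) has_real_derivative coeff (wt t j) k) (at t within {0..T}) \<and>
           ((\<lambda>s. coeff (\<psi> s j) k) has_real_derivative coeff (\<psi>t t j) k) (at t within {0..T})"
    and "\<forall>t\<in>{0..T}. \<forall>\<phi>. inXp N p \<phi> \<longrightarrow>
           (\<Sum>j=1..N. cint xp j (\<lambda>x. poly (vt t j) x * poly (\<phi> j) x))
         + (\<Sum>j=1..N. cint xp j (\<lambda>x. cspeed \<alpha> \<beta> (poly (\<psi> t j) x) * poly (w t j) x * poly (pderiv (\<phi> j)) x))
         - (\<Sum>j=1..N. flux \<alpha> \<beta> xp N (\<psi> t) (w t) (v t) j * trm xp N \<phi> j)
         + (\<Sum>j=1..N. flux \<alpha> \<beta> xp N (\<psi> t) (w t) (v t) (j - 1) * trp xp N \<phi> (j - 1))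
         = (\<Sum>j=1..N. cint xp j (\<lambda>x. cspeed \<alpha> \<beta> (poly (\<psi> t j) x) * poly (pderiv (w t j * \<phi> j)) x))
         - (\<Sum>j=1..N. cavg \<alpha> \<beta> xp N (\<psi> t) j * trm xp N (w t) j * trm xp N \<phi> j)
         + (\<Sum>j=1..N. cavg \<alpha> \<beta> xp N (\<psi> t) (j - 1) * trp xp N (w t) (j - 1) * trp xp N \<phi> (j - 1))
         - (\<Sum>j=1..N. visc \<alpha> \<beta> C \<theta> xp (\<psi> t) (v t) (w t) (vt t) (wt t) j *
                        cint xp j (\<lambda>x. poly (pderiv (v t j)) x * poly (pderiv (\<phi> j)) x))"
    and "\<forall>t\<in>{0..T}. \<forall>\<eta>. inXp N p \<eta> \<longrightarrow>
           (\<Sum>j=1..N. cint xp j (\<lambda>x. poly (wt t j) x * poly (\<eta> j) x))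
         + (\<Sum>j=1..N. cint xp j (\<lambda>x. cspeed \<alpha> \<beta> (poly (\<psi> t j) x) * poly (v t j) x * poly (pderiv (\<eta> j)) x))
         - (\<Sum>j=1..N. flux \<alpha> \<beta> xp N (\<psi> t) (v t) (w t) j * trm xp N \<eta> j)
         + (\<Sum>j=1..N. flux \<alpha> \<beta> xp N (\<psi> t) (v t) (w t) (j - 1) * trp xp N \<eta> (j - 1))
         = - (\<Sum>j=1..N. visc \<alpha> \<beta> C \<theta> xp (\<psi> t) (v t) (w t) (vt t) (wt t) j *
                        cint xp j (\<lambda>x. poly (pderiv (w t j)) x * poly (pderiv (\<eta> j)) x))"
    and "\<forall>t\<in>{0..T}. \<forall>\<zeta>. inXp N p \<zeta> \<longrightarrow>
           (\<Sum>j=1..N. cint xp j (\<lambda>x. poly (\<psi>t t j) x * poly (\<zeta> j) x))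
         = (\<Sum>j=1..N. cint xp j (\<lambda>x. poly (v t j) x * poly (\<zeta> j) x))"
  shows "\<forall>t\<in>{0..T}. \<exists>D.
           ((\<lambda>s. \<Sum>j=1..N. cint xp j (\<lambda>x. ((poly (v s j) x)\<^sup>2 + (poly (w s j) x)\<^sup>2) / 2))
              has_real_derivative D) (at t within {0..T}) \<and> D \<le> 0"
proof
  fix t assume t: "t \<in> {0..T}"
  have inX: "inXp N p (v t)" "inXp N p (w t)" using assms(7) t by auto
  have mesh: "\<forall>j\<in>{1..N}. xp (j - 1) \<le> xp j"
    using strict_mono_onD[OF assms(6)] by (simp add: order_less_imp_le)
  have "(\<Sum>j=1..N. cint xp j (\<lambda>x. poly (vt t j) x * poly (v t j) x))
      + (\<Sum>j=1..N. cint xp j (\<lambda>x. poly (wt t j) x * poly (w t j) x)) \<le> 0"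
    using assms(1-5) mesh assms(9)[rule_format, OF t inX(1)] assms(10)[rule_format, OF t inX(2)]
    by (intro energy_rate_nonpos) auto
  moreover have "((\<lambda>s. \<Sum>j=1..N. cint xp j (\<lambda>x. ((poly (v s j) x)\<^sup>2 + (poly (w s j) x)\<^sup>2) / 2))
          has_real_derivative
            (\<Sum>j=1..N. cint xp j (\<lambda>x. poly (vt t j) x * poly (v t j) x))
          + (\<Sum>j=1..N. cint xp j (\<lambda>x. poly (wt t j) x * poly (w t j) x))) (at t within {0..T})"
    using t assms(7,8) by (intro has_real_derivative_cell_energy[where p=p]) (auto simp: inXp_def)
  ultimately show "\<exists>D. ((\<lambda>s. \<Sum>j=1..N. cint xp j (\<lambda>x. ((poly (v s j) x)\<^sup>2 + (poly (w s j) x)\<^sup>2) / 2))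
              has_real_derivative D) (at t within {0..T}) \<and> D \<le> 0" by blast
qed

end
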